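(* Let $G$ be a connected simple graph (finite or infinite) with $C_G<\infty$. Then the set $DM(G)=\{\mu:\mu\text{ doubling measure on } G,\ C_\mu=C_G\}$ is a non-empty convex cone.
   Context: $G$ carries the shortest-path distance $d_G$. A measure on $G$ is a weight function $\mu:V_G\to(0,\infty)$, with $\mu(A)=\sum_{v\in A}\mu(v)$. Closed balls: $B(x,r)=\{y:d_G(x,y)\le r\}$. The doubling constant is $C_\mu=\sup\{\mu(B(x,2k+1))/\mu(B(x,k)):x\in V_G,\ k\in\{0,1,2,\dots\}\}$ (equivalently $\sup_{x,r>0}\mu(B^o(x,2r))/\mu(B^o(x,r))$ with open balls); $\mu$ is doubling if $C_\mu<\infty$, and $C_G=\inf\{C_\mu:\mu\text{ doubling on }G\}$. *)

theory Defs
  imports "HOL-Analysis.Analysis"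
begin

definition simple_graph :: "('a \<Rightarrow> 'a \<Rightarrow> bool) \<Rightarrow> bool" where
  "simple_graph E \<longleftrightarrow> (\<forall>x y. E x y \<longrightarrow> E y x) \<and> (\<forall>x. \<not> E x x)"

definition connected_graph :: "('a \<Rightarrow> 'a \<Rightarrow> bool) \<Rightarrow> bool" where
  "connected_graph E \<longleftrightarrow> (\<forall>x y. \<exists>n. (E ^^ n) x y)"

definition gdist :: "('a \<Rightarrow> 'a \<Rightarrow> bool) \<Rightarrow> 'a \<Rightarrow> 'a \<Rightarrow> nat" where
  "gdist E x y = (LEAST n. (E ^^ n) x y)"

definition gball :: "('a \<Rightarrow> 'a \<Rightarrow> bool) \<Rightarrow> 'a \<Rightarrow> nat \<Rightarrow> 'a set" where
  "gball E x r = {y. gdist E x y \<le> r}"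

text \<open>mu(A) = sum of the weights over A (possibly infinite, hence in ennreal).\<close>
definition wmeasure :: "('a \<Rightarrow> real) \<Rightarrow> 'a set \<Rightarrow> ennreal" where
  "wmeasure \<mu> A = infsum (\<lambda>v. ennreal (\<mu> v)) A"

definition doubling_const :: "('a \<Rightarrow> 'a \<Rightarrow> bool) \<Rightarrow> ('a \<Rightarrow> real) \<Rightarrow> ennreal" where
  "doubling_const E \<mu> =
     (SUP p \<in> (UNIV :: ('a \<times> nat) set).
        wmeasure \<mu> (gball E (fst p) (2 * snd p + 1)) / wmeasure \<mu> (gball E (fst p) (snd p)))"

definition doubling_measure :: "('a \<Rightarrow> 'a \<Rightarrow> bool) \<Rightarrow> ('a \<Rightarrow> real) \<Rightarrow> bool" where
  "doubling_measure E \<mu> \<longleftrightarrow> (\<forall>v. \<mu> v > 0) \<and> doubling_const E \<mu> < \<infinity>"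

definition graph_doubling_const :: "('a \<Rightarrow> 'a \<Rightarrow> bool) \<Rightarrow> ennreal" where
  "graph_doubling_const E = (INF \<mu> \<in> {\<mu>. doubling_measure E \<mu>}. doubling_const E \<mu>)"

definition DM :: "('a \<Rightarrow> 'a \<Rightarrow> bool) \<Rightarrow> ('a \<Rightarrow> real) set" where
  "DM E = {\<mu>. doubling_measure E \<mu> \<and> doubling_const E \<mu> = graph_doubling_const E}"

definition convex_cone_fun :: "('a \<Rightarrow> real) set \<Rightarrow> bool" where
  "convex_cone_fun S \<longleftrightarrow>
     (\<forall>\<mu>\<in>S. \<forall>\<nu>\<in>S. \<forall>a b. a > 0 \<longrightarrow> b > 0 \<longrightarrow> (\<lambda>v. a * \<mu> v + b * \<nu> v) \<in> S)"

end

theory Submission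
  imports Defs
begin

text \<open>A doubling measure forces every vertex to have boundedly many neighbours, so all balls
  are finite. On finite balls the bound C_mu <= c is the family of linear inequalities
  mu(B(x,2k+1)) <= c mu(B(x,k)), which is preserved by positive linear combinations: this is the
  cone property. For non-emptiness take doubling measures mu_n with C_mu_n < C_G + 1/(n+1),
  normalised to 1 at a base vertex x0. Comparing the weights of neighbours along shortest paths
  puts mu_n(x) between D^-d(x0,x) and D^d(x0,x) for D = C_G + 1, a compact product of intervals by
  Tychonoff, and a cluster point of the mu_n is a positive measure satisfying all the inequalities
  with c = C_G.\<close>

lemma gdist_relpowp: "connected_graph E \<Longrightarrow> (E ^^ gdist E x y) x y"
  unfolding gdist_def connected_graph_def by (rule LeastI_ex) auto

lemma gdist_le: "(E ^^ n) x y \<Longrightarrow> gdist E x y \<le> n"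
  by (simp add: gdist_def Least_le)

lemma gdist_self [simp]: "gdist E x x = 0"
  using gdist_le[of 0 E x x] by simp

lemma gdist_le_1_if_edge: "E x y \<Longrightarrow> gdist E x y \<le> 1"
  using gdist_le[of 1 E x y] by (simp only: relpowp_1)

lemma relpowp_sym:
  assumes sym: "\<And>x y. E x y \<Longrightarrow> E y x"
  shows "(E ^^ n) x y \<Longrightarrow> (E ^^ n) y x"
proof (induction n arbitrary: y)
  case 0
  then show ?case by simp
next
  case (Suc n)
  from Suc.prems obtain z where "(E ^^ n) x z" "E z y" by (rule relpowp_Suc_E)
  then show ?case using Suc.IH sym by (blast intro: relpowp_Suc_I2)
qed

lemma center_in_gball [simp]: "x \<in> gball E x r"
  by (simp add: gball_def)

lemma gball_0:
  assumes "connected_graph E"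
  shows "gball E x 0 = {x}"
proof -
  have "y = x" if "gdist E x y = 0" for y
    using gdist_relpowp[OF assms, of x y] that by simp
  then show ?thesis by (auto simp: gball_def)
qed

lemma gball_Suc_subset:
  assumes "connected_graph E"
  shows "gball E x (Suc r) \<subseteq> gball E x r \<union> (\<Union>z\<in>gball E x r. {y. E z y})"
proof
  fix y assume y: "y \<in> gball E x (Suc r)"
  show "y \<in> gball E x r \<union> (\<Union>z\<in>gball E x r. {y. E z y})"
  proof (cases "gdist E x y \<le> r")
    case True
    then show ?thesis by (simp add: gball_def)
  next
    case False
    with y have "(E ^^ Suc r) x y"
      using gdist_relpowp[OF assms, of x y] by (simp add: gball_def le_Suc_eq)
    then obtain z where "(E ^^ r) x z" "E z y" by (rule relpowp_Suc_E)
    then show ?thesis using gdist_le by (fastforce simp: gball_def)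
  qed
qed

lemma finite_gball:
  assumes "connected_graph E" and "\<And>z. finite {y. E z y}"
  shows "finite (gball E x r)"
proof (induction r)
  case 0
  then show ?case by (simp add: gball_0[OF assms(1)])
next
  case (Suc r)
  show ?case by (rule finite_subset[OF gball_Suc_subset[OF assms(1)]]) (use Suc assms(2) in auto)
qed

lemma wmeasure_finite:
  assumes "finite A" and "\<And>v. \<mu> v \<ge> 0"
  shows "wmeasure \<mu> A = ennreal (sum \<mu> A)"
  using assms by (simp add: wmeasure_def sum_ennreal)

lemma sum_le_wmeasure:
  assumes "finite F" and "F \<subseteq> A" and "\<And>v. \<mu> v \<ge> 0"
  shows "ennreal (sum \<mu> F) \<le> wmeasure \<mu> A"
proof -
  have "ennreal (sum \<mu> F) = infsum (\<lambda>v. ennreal (\<mu> v)) F"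
    using assms by (simp add: sum_ennreal)
  also have "\<dots> \<le> infsum (\<lambda>v. ennreal (\<mu> v)) A"
    by (rule infsum_mono_neutral) (use assms in \<open>auto simp: nonneg_summable_on_complete\<close>)
  finally show ?thesis by (simp add: wmeasure_def)
qed

lemma wmeasure_ratio_le_doubling_const:
  "wmeasure \<mu> (gball E x (2 * k + 1)) / wmeasure \<mu> (gball E x k) \<le> doubling_const E \<mu>"
  unfolding doubling_const_def by (rule SUP_upper2[where i="(x, k)"]) simp_all

lemma sum_unit_ball_le_doubling_const:
  assumes "connected_graph E" and "doubling_measure E \<mu>"
    and "finite F" and "F \<subseteq> gball E x 1"
  shows "sum \<mu> F \<le> enn2real (doubling_const E \<mu>) * \<mu> x"
proof -
  define c where "c = enn2real (doubling_const E \<mu>)"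
  have pos: "\<And>v. \<mu> v > 0" and c: "doubling_const E \<mu> = ennreal c"
    using assms(2) by (auto simp: doubling_measure_def c_def)
  have "ennreal (sum \<mu> F / \<mu> x) = ennreal (sum \<mu> F) / ennreal (\<mu> x)"
    using pos by (simp add: divide_ennreal sum_nonneg less_imp_le)
  also have "\<dots> \<le> wmeasure \<mu> (gball E x 1) / wmeasure \<mu> (gball E x 0)"
    using sum_le_wmeasure[OF assms(3,4)] wmeasure_finite[of "{x}" \<mu>] pos
    by (simp add: gball_0[OF assms(1)] less_imp_le divide_right_mono_ennreal)
  also have "\<dots> \<le> ennreal c"
    using wmeasure_ratio_le_doubling_const[of \<mu> E x 0] c by simp
  finally have "sum \<mu> F / \<mu> x \<le> c" by (simp add: c_def)
  then show ?thesis using pos[of x] by (simp add: c_def divide_le_eq)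
qed

text \<open>Each neighbour y of z has \<open>\<mu> z \<le> c \<mu> y\<close>, while all of them together weigh at most
  \<open>c \<mu> z\<close>; hence there are at most \<open>c\<^sup>2\<close> of them.\<close>
lemma finite_neighbours_if_doubling:
  assumes "simple_graph E" and "connected_graph E" and "doubling_measure E \<mu>"
  shows "finite {y. E z y}"
proof -
  define c where "c = enn2real (doubling_const E \<mu>)"
  have pos: "\<And>v. \<mu> v > 0" using assms(3) by (simp add: doubling_measure_def)
  have ball_bound: "sum \<mu> F \<le> c * \<mu> x" if "finite F" "F \<subseteq> gball E x 1" for F x
    using sum_unit_ball_le_doubling_const[OF assms(2,3) that] by (simp add: c_def)
  have neighbour_bound: "\<mu> z \<le> c * \<mu> y" if "E z y" for y
    using ball_bound[of "{z}" y] that assms(1) gdist_le_1_if_edge[of E y z]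
    by (simp add: simple_graph_def gball_def)
  have c_ge_1: "c \<ge> 1" using ball_bound[of "{z}" z] pos[of z] by simp
  have "finite {y. E z y} \<and> card {y. E z y} \<le> nat \<lceil>c * c\<rceil>"
  proof (rule finite_if_finite_subsets_card_bdd)
    fix G assume G: "G \<subseteq> {y. E z y}" "finite G"
    have "real (card G) * (\<mu> z / c) \<le> sum \<mu> G"
      by (rule sum_bounded_below) (use G neighbour_bound c_ge_1 in \<open>auto simp: divide_le_eq mult.commute\<close>)
    also have "\<dots> \<le> c * \<mu> z"
      using G gdist_le_1_if_edge[of E z] by (intro ball_bound) (auto simp: gball_def)
    finally have "real (card G) * \<mu> z \<le> (c * c) * \<mu> z" using c_ge_1 by (simp add: field_simps)
    then have "real (card G) \<le> c * c" using pos[of z] by simp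
    then show "card G \<le> nat \<lceil>c * c\<rceil>" by linarith
  qed
  then show ?thesis by blast
qed

lemma finite_gball_if_doubling:
  assumes "simple_graph E" and "connected_graph E" and "doubling_measure E \<mu>"
  shows "finite (gball E x r)"
  using finite_gball[OF assms(2) finite_neighbours_if_doubling[OF assms]] .

definition doubling_with :: "('a \<Rightarrow> 'a \<Rightarrow> bool) \<Rightarrow> real \<Rightarrow> ('a \<Rightarrow> real) \<Rightarrow> bool" where
  "doubling_with E c \<mu> \<longleftrightarrow>
     (\<forall>x k. sum \<mu> (gball E x (2 * k + 1)) \<le> c * sum \<mu> (gball E x k))"

lemma doubling_const_le_iff:
  assumes "\<And>x r. finite (gball E x r)" and "\<And>v. \<mu> v > 0" and "c \<ge> 0"
  shows "doubling_const E \<mu> \<le> ennreal c \<longleftrightarrow> doubling_with E c \<mu>"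
proof -
  have ball_pos: "sum \<mu> (gball E x k) > 0" for x k
    using assms(1,2) center_in_gball[of x E k] by (intro sum_pos) blast+
  have ratio: "wmeasure \<mu> (gball E x (2 * k + 1)) / wmeasure \<mu> (gball E x k)
      = ennreal (sum \<mu> (gball E x (2 * k + 1)) / sum \<mu> (gball E x k))" for x k
    using assms(1,2) ball_pos
    by (simp add: wmeasure_finite less_imp_le divide_ennreal sum_nonneg)
  have "doubling_const E \<mu> \<le> ennreal c \<longleftrightarrow>
      (\<forall>x k. sum \<mu> (gball E x (2 * k + 1)) / sum \<mu> (gball E x k) \<le> c)"
    unfolding doubling_const_def using assms(3) by (simp add: SUP_le_iff ratio[simplified])
  also have "\<dots> \<longleftrightarrow> doubling_with E c \<mu>"
    using ball_pos by (simp add: doubling_with_def pos_divide_le_eq mult.commute)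
  finally show ?thesis .
qed

lemma doubling_with_mono:
  assumes "doubling_with E c \<mu>" and "c \<le> c'" and "\<And>v. \<mu> v \<ge> 0"
  shows "doubling_with E c' \<mu>"
  unfolding doubling_with_def
proof (intro allI)
  fix x k
  have "c * sum \<mu> (gball E x k) \<le> c' * sum \<mu> (gball E x k)"
    using assms(2,3) by (intro mult_right_mono sum_nonneg) auto
  then show "sum \<mu> (gball E x (2 * k + 1)) \<le> c' * sum \<mu> (gball E x k)"
    using assms(1) unfolding doubling_with_def by (meson order_trans)
qed

lemma doubling_with_scale:
  assumes "doubling_with E c \<mu>" and "a \<ge> 0"
  shows "doubling_with E c (\<lambda>v. a * \<mu> v)"
  using assms mult_left_mono[of _ _ a]
  by (fastforce simp: doubling_with_def sum_distrib_left[symmetric] mult.left_commute)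

lemma doubling_with_add:
  assumes "doubling_with E c \<mu>" and "doubling_with E c \<nu>"
  shows "doubling_with E c (\<lambda>v. \<mu> v + \<nu> v)"
  using assms add_mono by (fastforce simp: doubling_with_def sum.distrib distrib_left)

lemma closed_doubling_with: "closed {\<mu> :: 'a \<Rightarrow> real. doubling_with E c \<mu>}"
  unfolding doubling_with_def
  by (intro closed_Collect_all closed_Collect_le continuous_intros continuous_on_product_coordinates)

lemma doubling_with_limit:
  assumes "\<And>n. doubling_with E (c + 1 / Suc n) \<mu>" and "\<And>v. \<mu> v \<ge> 0"
  shows "doubling_with E c \<mu>"
  unfolding doubling_with_def
proof (intro allI)
  fix x k
  have "(\<lambda>n. (c + 1 / Suc n) * sum \<mu> (gball E x k)) \<longlonglongrightarrow> (c + 0) * sum \<mu> (gball E x k)"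
    by (intro tendsto_intros LIMSEQ_Suc[OF lim_const_over_n])
  then show "sum \<mu> (gball E x (2 * k + 1)) \<le> c * sum \<mu> (gball E x k)"
    using assms(1) by (intro LIMSEQ_le_const) (auto simp: doubling_with_def)
qed

lemma doubling_with_edge_le:
  assumes "connected_graph E" and "finite (gball E a 1)" and "\<And>v. \<mu> v \<ge> 0"
    and "doubling_with E D \<mu>" and "E a b"
  shows "\<mu> b \<le> D * \<mu> a"
proof -
  have "\<mu> b \<le> sum \<mu> (gball E a 1)"
    using assms(2,3,5) gdist_le_1_if_edge[of E a b] by (intro member_le_sum) (auto simp: gball_def)
  also have "\<dots> \<le> D * sum \<mu> (gball E a 0)"
    using assms(4) unfolding doubling_with_def by (metis mult_zero_right add_0)
  finally show ?thesis by (simp add: gball_0[OF assms(1)])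
qed

lemma doubling_with_walk_le:
  assumes "connected_graph E" and "\<And>x. finite (gball E x 1)" and "\<And>v. \<mu> v \<ge> 0"
    and "doubling_with E D \<mu>" and "D \<ge> 0"
  shows "(E ^^ n) x y \<Longrightarrow> \<mu> y \<le> D ^ n * \<mu> x"
proof (induction n arbitrary: y)
  case 0
  then show ?case by simp
next
  case (Suc n)
  from Suc.prems obtain z where z: "(E ^^ n) x z" "E z y" by (rule relpowp_Suc_E)
  have "\<mu> y \<le> D * \<mu> z"
    using doubling_with_edge_le[OF assms(1,2,3,4) z(2)] .
  also have "\<dots> \<le> D * (D ^ n * \<mu> x)"
    using Suc.IH[OF z(1)] assms(5) by (rule mult_left_mono)
  finally show ?case by simp
qed

definition harnack_box :: "('a \<Rightarrow> 'a \<Rightarrow> bool) \<Rightarrow> 'a \<Rightarrow> real \<Rightarrow> ('a \<Rightarrow> real) set" where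
  "harnack_box E x\<^sub>0 D = PiE UNIV (\<lambda>x. {1 / D ^ gdist E x\<^sub>0 x .. D ^ gdist E x\<^sub>0 x})"

lemma compact_harnack_box: "compact (harnack_box E x\<^sub>0 D)"
  using compactin_PiE[of "\<lambda>_. euclidean" UNIV "\<lambda>x. {1 / D ^ gdist E x\<^sub>0 x .. D ^ gdist E x\<^sub>0 x}"]
  unfolding euclidean_product_topology harnack_box_def by simp

lemma harnack_box_pos:
  assumes "\<mu> \<in> harnack_box E x\<^sub>0 D" and "D > 0"
  shows "\<mu> v > 0"
proof -
  have "1 / D ^ gdist E x\<^sub>0 v \<le> \<mu> v" using assms(1) by (simp add: harnack_box_def PiE_iff)
  moreover have "1 / D ^ gdist E x\<^sub>0 v > 0" using assms(2) by simp
  ultimately show ?thesis by linarith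
qed

lemma doubling_with_in_harnack_box:
  assumes "simple_graph E" and "connected_graph E" and "\<And>x. finite (gball E x 1)"
    and "\<And>v. \<mu> v > 0" and "\<mu> x\<^sub>0 = 1" and "doubling_with E D \<mu>" and "D \<ge> 1"
  shows "\<mu> \<in> harnack_box E x\<^sub>0 D"
proof -
  have walk_le: "(E ^^ n) x y \<Longrightarrow> \<mu> y \<le> D ^ n * \<mu> x" for n x y
    using assms(4,7) by (intro doubling_with_walk_le[OF assms(2,3) _ assms(6)]) (auto intro: less_imp_le)
  have "1 / D ^ gdist E x\<^sub>0 x \<le> \<mu> x \<and> \<mu> x \<le> D ^ gdist E x\<^sub>0 x" for x
  proof -
    have walk: "(E ^^ gdist E x\<^sub>0 x) x\<^sub>0 x" by (rule gdist_relpowp[OF assms(2)])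
    moreover have "(E ^^ gdist E x\<^sub>0 x) x x\<^sub>0"
      using assms(1) by (intro relpowp_sym[OF _ walk]) (auto simp: simple_graph_def)
    ultimately show ?thesis
      using walk_le assms(5,7) by (fastforce simp: divide_le_eq mult.commute)
  qed
  then show ?thesis by (simp add: harnack_box_def PiE_iff)
qed

lemma DM_eq_positive_doubling_with:
  assumes "\<And>x r. finite (gball E x r)" and "graph_doubling_const E = ennreal c" and "c \<ge> 0"
  shows "DM E = {\<mu>. (\<forall>v. \<mu> v > 0) \<and> doubling_with E c \<mu>}"
proof (intro set_eqI iffI)
  fix \<mu> assume "\<mu> \<in> DM E"
  then have pos: "\<And>v. \<mu> v > 0" and "doubling_const E \<mu> \<le> ennreal c"
    using assms(2) by (auto simp: DM_def doubling_measure_def)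
  then show "\<mu> \<in> {\<mu>. (\<forall>v. \<mu> v > 0) \<and> doubling_with E c \<mu>}"
    using doubling_const_le_iff[OF assms(1) pos assms(3)] by simp
next
  fix \<mu> assume "\<mu> \<in> {\<mu>. (\<forall>v. \<mu> v > 0) \<and> doubling_with E c \<mu>}"
  then have pos: "\<And>v. \<mu> v > 0" and le: "doubling_const E \<mu> \<le> ennreal c"
    using doubling_const_le_iff[OF assms(1) _ assms(3)] by auto
  then have "doubling_measure E \<mu>"
    by (auto simp: doubling_measure_def intro: le_less_trans)
  then have "graph_doubling_const E \<le> doubling_const E \<mu>"
    unfolding graph_doubling_const_def by (intro INF_lower) simp
  with le \<open>doubling_measure E \<mu>\<close> show "\<mu> \<in> DM E"
    using assms(2) by (simp add: DM_def)
qed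

lemma convex_cone_fun_positive_doubling_with:
  "convex_cone_fun {\<mu>. (\<forall>v. \<mu> v > 0) \<and> doubling_with E c \<mu>}"
  by (auto simp: convex_cone_fun_def intro!: doubling_with_add doubling_with_scale add_pos_pos)

lemma exists_positive_doubling_with_graph_doubling_const:
  assumes "simple_graph E" and "connected_graph E" and "\<And>x r. finite (gball E x r)"
    and "graph_doubling_const E = ennreal c" and "c \<ge> 0"
  shows "\<exists>\<mu>. (\<forall>v. \<mu> v > 0) \<and> doubling_with E c \<mu>"
proof -
  obtain x\<^sub>0 :: 'a where True by simp
  have "\<exists>\<mu>. doubling_measure E \<mu> \<and> doubling_const E \<mu> < ennreal (c + 1 / Suc n)" for n
  proof -
    have "graph_doubling_const E < ennreal (c + 1 / Suc n)"
      using assms(4,5) by (simp add: ennreal_less_iff)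
    then show ?thesis unfolding graph_doubling_const_def INF_less_iff by blast
  qed
  then obtain M where M: "\<And>n. doubling_measure E (M n)"
    "\<And>n. doubling_const E (M n) < ennreal (c + 1 / Suc n)" by metis
  have M_pos: "M n v > 0" for n v using M(1) by (simp add: doubling_measure_def)
  define N where "N n = (\<lambda>v. inverse (M n x\<^sub>0) * M n v)" for n
  have N_pos: "N n v > 0" for n v using M_pos by (simp add: N_def)
  have N_doubling: "doubling_with E (c + 1 / Suc n) (N n)" for n
    unfolding N_def using M_pos
    by (intro doubling_with_scale doubling_const_le_iff[OF assms(3), THEN iffD1] less_imp_le[OF M(2)])
      (auto simp: assms(5) less_imp_le)
  have N_mono: "N m \<in> {\<mu>. doubling_with E (c + 1 / Suc n) \<mu>}" if "n \<le> m" for m n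
  proof -
    have "c + 1 / Suc m \<le> c + 1 / Suc n" using that by (simp add: frac_le)
    with N_doubling[of m] N_pos[of m] show ?thesis
      by (simp add: doubling_with_mono less_imp_le)
  qed
  have N_base: "N n x\<^sub>0 = 1" for n using M_pos[of n x\<^sub>0] by (simp add: N_def)
  have N_box: "N n \<in> harnack_box E x\<^sub>0 (c + 1)" for n
    using N_pos N_base assms(5) N_mono[of 0 n]
    by (intro doubling_with_in_harnack_box[OF assms(1,2,3)]) auto
  have "harnack_box E x\<^sub>0 (c + 1) \<inter> (\<Inter>n\<in>UNIV. {\<mu>. doubling_with E (c + 1 / Suc n) \<mu>}) \<noteq> {}"
  proof (rule compact_imp_fip_image[OF compact_harnack_box closed_doubling_with])
    fix I :: "nat set" assume "finite I"
    then have "N (Max I) \<in> {\<mu>. doubling_with E (c + 1 / Suc i) \<mu>}" if "i \<in> I" for i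
      using that by (intro N_mono) simp
    with N_box show "harnack_box E x\<^sub>0 (c + 1) \<inter> (\<Inter>i\<in>I. {\<mu>. doubling_with E (c + 1 / Suc i) \<mu>}) \<noteq> {}"
      by blast
  qed
  then obtain \<mu> where "\<mu> \<in> harnack_box E x\<^sub>0 (c + 1)" and "\<And>n. doubling_with E (c + 1 / Suc n) \<mu>"
    by blast
  moreover from this have "\<And>v. \<mu> v > 0" using assms(5) by (intro harnack_box_pos) auto
  ultimately show ?thesis by (blast intro: doubling_with_limit less_imp_le)
qed

theorem proposition2p2:
  fixes E :: "'a \<Rightarrow> 'a \<Rightarrow> bool"
  assumes "simple_graph E" and "connected_graph E"
    and "graph_doubling_const E < \<infinity>"
  shows "DM E \<noteq> {} \<and> convex_cone_fun (DM E)"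
proof -
  obtain \<mu>\<^sub>0 where "doubling_measure E \<mu>\<^sub>0"
    using assms(3) by (fastforce simp: graph_doubling_const_def)
  then have fin: "\<And>x r. finite (gball E x r)"
    using finite_gball_if_doubling[OF assms(1,2)] by blast
  define c where "c = enn2real (graph_doubling_const E)"
  have c: "graph_doubling_const E = ennreal c" "c \<ge> 0"
    using assms(3) by (auto simp: c_def)
  show ?thesis
    using DM_eq_positive_doubling_with[OF fin c] convex_cone_fun_positive_doubling_with
      exists_positive_doubling_with_graph_doubling_const[OF assms(1,2) fin c]
    by auto
qed

end
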